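(* Let $b \ge k \ge 4$ be integers. Then $$R_{(b,k)} \le \left(\frac{1}{\log b} + \frac{b^2}{(b^2-3b+2)\,\log\frac{b-2}{k-3}}\right)^{-1}.$$
   Context: All logarithms are to base 2. For integers $b\ge k$ and $n\ge1$, a $(b,k)$-hash code of length $n$ is a subset $C\subseteq\{1,\dots,b\}^n$ such that for any $k$ distinct elements of $C$ there is a coordinate $i\in\{1,\dots,n\}$ in which their $i$-th coordinates are pairwise distinct. $A(b,k,n)$ is the largest size of a $(b,k)$-hash code of length $n$, and $R_{(b,k)}=\limsup_{n\to\infty}\frac1n\log A(b,k,n)$. *)

theory Defs
  imports "HOL-Analysis.Analysis" "HOL-Library.Liminf_Limsup"
begin

definition words :: "nat \<Rightarrow> nat \<Rightarrow> nat list set" where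
  "words b n = {xs. length xs = n \<and> set xs \<subseteq> {1..b}}"

definition hash_code :: "nat \<Rightarrow> nat \<Rightarrow> nat \<Rightarrow> nat list set \<Rightarrow> bool" where
  "hash_code b k n C \<longleftrightarrow> C \<subseteq> words b n \<and>
     (\<forall>S. S \<subseteq> C \<and> card S = k \<longrightarrow> (\<exists>i<n. inj_on (\<lambda>x. x ! i) S))"

definition A_hash :: "nat \<Rightarrow> nat \<Rightarrow> nat \<Rightarrow> nat" where
  "A_hash b k n = Max {card C | C. hash_code b k n C}"

definition R_hash :: "nat \<Rightarrow> nat \<Rightarrow> ereal" where
  "R_hash b k = limsup (\<lambda>n. ereal (log 2 (real (A_hash b k n)) / real n))"

end

(*
  Let C be a (b,k)-hash code of length n, and split the coordinates into a prefix of length m,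
  with b^m somewhat smaller than |C|, and the remaining n - m. For two codewords x <> y with a
  common prefix, any k - 2 further codewords are separated from x and y by a coordinate after
  the prefix. Let a(z) count the coordinates after the prefix where x, y, z are pairwise
  distinct. A Kraft-type counting gives sum_z r^a(z) <= k - 1 with r = (k-3)/(b-2), and by
  convexity log(|C|/(k-1)) <= log((b-2)/(k-3)) * mean_z a(z). Averaging over the pairs inside
  the prefix classes, an inequality for mixtures of distributions on b letters bounds the mean
  of a(z) by (b-1)(b-2)/b^2 per coordinate. Choosing b^m close to 2^(-sqrt n) |C| and letting
  n tend to infinity gives the bound.
*)

theory Submission
  imports Defs "HOL-Real_Asymp.Real_Asymp"
begin

section \<open>Mixtures of distributions\<close>

lemma cubic_tangent_le:
  fixes x a :: real
  assumes "2 * x + 4 * a \<le> 3"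
  shows "3 * a^2 - 2 * a^3 + (6 * a - 6 * a^2) * (x - a) \<le> 3 * x^2 - 2 * x^3"
proof -
  have "3 * x^2 - 2 * x^3 - (3 * a^2 - 2 * a^3 + (6 * a - 6 * a^2) * (x - a)) = (x - a)^2 * (3 - 4 * a - 2 * x)"
    by (simp add: algebra_simps power2_eq_square power3_eq_cube)
  moreover have "(x - a)^2 * (3 - 4 * a - 2 * x) \<ge> 0"
    using assms by simp
  ultimately show ?thesis
    by linarith
qed

lemma card_mul_cubic_le_sum_cubic:
  fixes q :: "'u \<Rightarrow> real"
  assumes "finite S" "\<forall>u\<in>S. 2 * q u + 4 * a \<le> 3" "sum q S = real (card S) * a"
  shows "real (card S) * (3 * a^2 - 2 * a^3) \<le> (\<Sum>u\<in>S. 3 * (q u)^2 - 2 * (q u)^3)"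
proof -
  have "(\<Sum>u\<in>S. 3 * a^2 - 2 * a^3 + (6 * a - 6 * a^2) * (q u - a)) \<le> (\<Sum>u\<in>S. 3 * (q u)^2 - 2 * (q u)^3)"
    using assms(2) by (intro sum_mono cubic_tangent_le) auto
  moreover have "(\<Sum>u\<in>S. 3 * a^2 - 2 * a^3 + (6 * a - 6 * a^2) * (q u - a))
      = real (card S) * (3 * a^2 - 2 * a^3) + (6 * a - 6 * a^2) * (sum q S - real (card S) * a)"
    by (simp add: sum.distrib sum_distrib_left[symmetric] sum_subtractf)
  ultimately show ?thesis
    using assms(3) by simp
qed

text \<open>Write \<open>\<phi> x = 3 x\<^sup>2 - 2 x\<^sup>3\<close>. If every \<open>q u \<le> 1/2\<close>, the \<open>V\<close>-term is nonnegative and \<open>\<Sum> \<phi> (q u)\<close> is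
  smallest for the uniform vector; otherwise a single heavy point \<open>u\<^sub>0\<close> controls the \<open>V\<close>-term and the
  bound becomes a cubic inequality in \<open>t = 1 - q u\<^sub>0 < 1/2\<close>.\<close>

lemma cubic_variance_bound_uniform_case:
  fixes q V :: "'u \<Rightarrow> real"
  assumes U: "finite U" "4 \<le> card U"
    and q: "\<forall>u\<in>U. 0 \<le> q u \<and> q u \<le> 1/2" "sum q U = 1" and V: "\<forall>u\<in>U. 0 \<le> V u"
  shows "1 - (\<Sum>u\<in>U. 3 * (q u)^2 - 2 * (q u)^3) - (\<Sum>u\<in>U. V u * (1 - 2 * q u))
      \<le> (real (card U) - 1) * (real (card U) - 2) / (real (card U))^2"
proof -
  define B where "B = real (card U)"
  have B4: "B \<ge> 4"
    using U(2) by (simp add: B_def)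
  have "0 \<le> (\<Sum>u\<in>U. V u * (1 - 2 * q u))"
    using q V by (auto intro!: sum_nonneg)
  moreover have "B * (3 * (1/B)^2 - 2 * (1/B)^3) \<le> (\<Sum>u\<in>U. 3 * (q u)^2 - 2 * (q u)^3)"
    unfolding B_def
  proof (rule card_mul_cubic_le_sum_cubic[OF U(1)])
    have "1 / real (card U) \<le> 1/4"
      using U(2) by (simp add: field_simps)
    then show "\<forall>u\<in>U. 2 * q u + 4 * (1 / real (card U)) \<le> 3"
      using q(1) by fastforce
    show "sum q U = real (card U) * (1 / real (card U))"
      using q(2) U(2) by simp
  qed
  moreover have "1 - B * (3 * (1/B)^2 - 2 * (1/B)^3) = (B - 1) * (B - 2) / B^2"
    using B4 by (simp add: field_simps power2_eq_square power3_eq_cube; simp add: algebra_simps)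
  ultimately show ?thesis
    unfolding B_def by linarith
qed

lemma heavy_point_cubic_identity:
  fixes t D :: real
  assumes "D \<noteq> 0"
  shows "1 - (3 * (1 - t)^2 - 2 * (1 - t)^3) - D * (3 * (t / D)^2 - 2 * (t / D)^3)
      + (1 - 2 * t) * (D - 1) / D * (t * (1 - t)) = (D - 1) / D * t - 2 * t^3 * (D - 1) / D^2"
proof -
  define a where "a = 1 / D"
  have "1 - (3 * (1 - t)^2 - 2 * (1 - t)^3) - (3 * t^2 * a - 2 * t^3 * a^2) + (1 - 2 * t) * (1 - a) * (t * (1 - t))
      = (1 - a) * t - 2 * t^3 * (a - a^2)"
    by (simp add: algebra_simps power2_eq_square power3_eq_cube)
  moreover have "D * (3 * (t / D)^2 - 2 * (t / D)^3) = 3 * t^2 * a - 2 * t^3 * a^2"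
    using assms by (simp add: a_def power2_eq_square power3_eq_cube field_simps)
  moreover have "(1 - 2 * t) * (D - 1) / D * (t * (1 - t)) = (1 - 2 * t) * (1 - a) * (t * (1 - t))"
    using assms by (simp add: a_def field_simps)
  moreover have "(D - 1) / D * t = (1 - a) * t"
    using assms by (simp add: a_def field_simps)
  moreover have "2 * t^3 * (D - 1) / D^2 = 2 * t^3 * (a - a^2)"
    using assms by (simp add: a_def field_simps power2_eq_square)
  ultimately show ?thesis
    by simp
qed

lemma heavy_point_cubic_le:
  fixes t B :: real
  assumes B: "4 \<le> B" and t: "0 \<le> t" "t < 1/2"
  shows "1 - (3 * (1 - t)^2 - 2 * (1 - t)^3) - (B - 1) * (3 * (t / (B - 1))^2 - 2 * (t / (B - 1))^3)
      + (1 - 2 * t) * (B - 2) / (B - 1) * (t * (1 - t)) \<le> (B - 1) * (B - 2) / B^2"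
proof -
  have "1 - (3 * (1 - t)^2 - 2 * (1 - t)^3) - (B - 1) * (3 * (t / (B - 1))^2 - 2 * (t / (B - 1))^3)
      + (1 - 2 * t) * (B - 2) / (B - 1) * (t * (1 - t)) = (B - 2) / (B - 1) * t - 2 * t^3 * (B - 2) / (B - 1)^2"
    using heavy_point_cubic_identity[of "B - 1" t] B by (simp add: algebra_simps)
  also have "\<dots> \<le> (B - 2) / (B - 1) * (1/2)"
  proof -
    have "0 \<le> 2 * t^3 * (B - 2) / (B - 1)^2"
      using t B by simp
    moreover have "(B - 2) / (B - 1) * t \<le> (B - 2) / (B - 1) * (1/2)"
      using t B by (intro mult_left_mono) auto
    ultimately show ?thesis
      by linarith
  qed
  also have "\<dots> \<le> (B - 1) * (B - 2) / B^2"
  proof -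
    have "B * 4 \<le> B * B"
      using B by (intro mult_left_mono) auto
    then have "B^2 \<le> 2 * (B - 1)^2"
      by (simp add: power2_eq_square algebra_simps)
    then have "B^2 * (B - 2) \<le> 2 * (B - 1)^2 * (B - 2)"
      using B by (intro mult_right_mono) auto
    then show ?thesis
      using B by (simp add: field_simps power2_eq_square)
  qed
  finally show ?thesis .
qed

lemma sum_cubic_ge_heavy_point:
  fixes q :: "'u \<Rightarrow> real"
  assumes U: "finite U" "4 \<le> card U" and q: "\<forall>u\<in>U. 0 \<le> q u" "sum q U = 1"
    and u0: "u0 \<in> U" "1/2 < q u0"
  defines "B \<equiv> real (card U)" and "t \<equiv> 1 - q u0"
  shows "(3 * (1 - t)^2 - 2 * (1 - t)^3) + (B - 1) * (3 * (t / (B - 1))^2 - 2 * (t / (B - 1))^3)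
      \<le> (\<Sum>u\<in>U. 3 * (q u)^2 - 2 * (q u)^3)"
proof -
  have B: "4 \<le> B" "real (card (U - {u0})) = B - 1"
    using U u0 by (simp_all add: B_def of_nat_diff)
  have sum: "sum q (U - {u0}) = t"
    using q(2) u0 U by (simp add: t_def sum_diff1)
  have "real (card (U - {u0})) * (3 * (t / (B - 1))^2 - 2 * (t / (B - 1))^3)
      \<le> (\<Sum>u\<in>U - {u0}. 3 * (q u)^2 - 2 * (q u)^3)"
  proof (rule card_mul_cubic_le_sum_cubic)
    have "q u \<le> sum q U" if "u \<in> U" for u
      using that q(1) U(1) by (intro member_le_sum) auto
    then have q1: "q u \<le> 1" if "u \<in> U" for u
      using that q(2) by simp
    have "t / (B - 1) \<le> 1/4"
      using u0(2) B by (simp add: t_def field_simps)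
    then show "\<forall>u\<in>U - {u0}. 2 * q u + 4 * (t / (B - 1)) \<le> 3"
    proof (intro ballI)
      fix u assume "u \<in> U - {u0}"
      then have "q u \<le> 1"
        using q1 by simp
      then show "2 * q u + 4 * (t / (B - 1)) \<le> 3"
        using \<open>t / (B - 1) \<le> 1/4\<close> by linarith
    qed
    show "sum q (U - {u0}) = real (card (U - {u0})) * (t / (B - 1))"
      using sum B by simp
  qed (use U in simp)
  moreover have "(\<Sum>u\<in>U. 3 * (q u)^2 - 2 * (q u)^3) = (3 * (q u0)^2 - 2 * (q u0)^3) + (\<Sum>u\<in>U - {u0}. 3 * (q u)^2 - 2 * (q u)^3)"
    using u0 U by (simp add: sum.remove)
  ultimately show ?thesis
    using B by (simp add: t_def)
qed

lemma cubic_variance_bound_heavy_case: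
  fixes q V :: "'u \<Rightarrow> real"
  assumes U: "finite U" "4 \<le> card U"
    and q: "\<forall>u\<in>U. 0 \<le> q u" "sum q U = 1" and V: "\<forall>u\<in>U. 0 \<le> V u"
    and u0: "u0 \<in> U" "1/2 < q u0"
    and V_u0: "V u0 \<le> (real (card U) - 1) * sum V (U - {u0})" "V u0 \<le> q u0 * (1 - q u0)"
  shows "1 - (\<Sum>u\<in>U. 3 * (q u)^2 - 2 * (q u)^3) - (\<Sum>u\<in>U. V u * (1 - 2 * q u))
      \<le> (real (card U) - 1) * (real (card U) - 2) / (real (card U))^2"
proof -
  define B where "B = real (card U)"
  define t where "t = 1 - q u0"
  define U' where "U' = U - {u0}"
  have B4: "B \<ge> 4"
    using U(2) by (simp add: B_def)
  have q': "q u \<le> t" if "u \<in> U'" for u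
  proof -
    have "q u \<le> sum q U'"
      using that q(1) U by (intro member_le_sum) (auto simp: U'_def)
    then show ?thesis
      using q(2) u0 U by (simp add: U'_def t_def sum_diff1)
  qed
  have "q u0 \<le> sum q U"
    using u0 q(1) U(1) by (intro member_le_sum) auto
  then have t: "0 \<le> t" "t < 1/2"
    using u0 q(2) by (simp_all add: t_def)
  have "(1 - 2 * t) * sum V U' \<le> (\<Sum>u\<in>U'. V u * (1 - 2 * q u))"
    unfolding sum_distrib_left
  proof (rule sum_mono)
    fix u assume "u \<in> U'"
    then have "V u * q u \<le> V u * t"
      using q' V by (intro mult_left_mono) (auto simp: U'_def)
    then show "(1 - 2 * t) * V u \<le> V u * (1 - 2 * q u)"
      by (simp add: algebra_simps)
  qed
  moreover have "(1 - 2 * t) * (V u0 / (B - 1)) \<le> (1 - 2 * t) * sum V U'"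
    using V_u0(1) B4 t by (intro mult_left_mono) (auto simp: U'_def B_def field_simps)
  moreover have "(\<Sum>u\<in>U. V u * (1 - 2 * q u)) = V u0 * (2 * t - 1) + (\<Sum>u\<in>U'. V u * (1 - 2 * q u))"
    using u0 U by (simp add: U'_def t_def sum.remove)
  moreover have "(1 - 2 * t) * ((B - 2) / (B - 1)) * V u0 \<le> (1 - 2 * t) * ((B - 2) / (B - 1)) * (t * (1 - t))"
    using V_u0(2) t B4 by (intro mult_left_mono) (simp_all add: t_def mult.commute)
  moreover have "(1 - 2 * t) * ((B - 2) / (B - 1)) * V u0 = (1 - 2 * t) * V u0 - (1 - 2 * t) * (V u0 / (B - 1))"
    using B4 by (simp add: field_simps)
  ultimately have "- ((1 - 2 * t) * (B - 2) / (B - 1) * (t * (1 - t))) \<le> (\<Sum>u\<in>U. V u * (1 - 2 * q u))"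
    by (simp add: algebra_simps)
  then show ?thesis
    using heavy_point_cubic_le[OF B4 t] sum_cubic_ge_heavy_point[OF U q u0]
    unfolding B_def t_def by linarith
qed

lemma sum_off_diagonal:
  fixes X :: "'u \<Rightarrow> 'u \<Rightarrow> real"
  assumes "finite U"
  shows "(\<Sum>u\<in>U. \<Sum>v\<in>U. if u = v then 0 else X u v) = (\<Sum>u\<in>U. \<Sum>v\<in>U. X u v) - (\<Sum>u\<in>U. X u u)"
proof -
  have "(\<Sum>v\<in>U. if u = v then 0 else X u v) = (\<Sum>v\<in>U. X u v) - X u u" if "u \<in> U" for u
  proof -
    have "(\<Sum>v\<in>U. if u = v then 0 else X u v) = (\<Sum>v\<in>U. X u v - (if u = v then X u v else 0))"
      by (rule sum.cong) auto
    then show ?thesis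
      using that assms by (simp add: sum_subtractf)
  qed
  then show ?thesis
    by (simp add: sum_subtractf)
qed

context
  fixes U :: "'u set" and J :: "'j set" and w :: "'j \<Rightarrow> real" and p :: "'j \<Rightarrow> 'u \<Rightarrow> real"
    and q V :: "'u \<Rightarrow> real"
  assumes U: "finite U" and J: "finite J"
    and w: "\<forall>j\<in>J. 0 \<le> w j" "sum w J = 1"
    and p: "\<forall>j\<in>J. \<forall>u\<in>U. 0 \<le> p j u" "\<forall>j\<in>J. sum (p j) U = 1"
    and q_def: "q = (\<lambda>u. \<Sum>j\<in>J. w j * p j u)"
    and V_def: "V = (\<lambda>u. \<Sum>j\<in>J. w j * (p j u - q u)^2)"
begin

lemma mixture_nonneg: "u \<in> U \<Longrightarrow> 0 \<le> q u"
  using w p by (auto simp: q_def intro!: sum_nonneg)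

lemma mixture_sum: "sum q U = 1"
proof -
  have "sum q U = (\<Sum>j\<in>J. w j * sum (p j) U)"
    by (simp add: q_def sum.swap[of _ U] sum_distrib_left)
  also have "\<dots> = 1"
    using p w by simp
  finally show ?thesis .
qed

lemma second_moment_eq: "(\<Sum>j\<in>J. w j * (p j u)^2) = (q u)^2 + V u"
proof -
  have "V u = (\<Sum>j\<in>J. w j * (p j u)^2 - 2 * q u * (w j * p j u) + (q u)^2 * w j)"
    unfolding V_def by (rule sum.cong) (auto simp: power2_eq_square algebra_simps)
  also have "\<dots> = (\<Sum>j\<in>J. w j * (p j u)^2) - 2 * q u * q u + (q u)^2 * sum w J"
    by (simp add: sum.distrib sum_subtractf sum_distrib_left q_def)
  finally show ?thesis
    using w by (simp add: power2_eq_square)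
qed

lemma variance_nonneg: "0 \<le> V u"
  using w by (auto simp: V_def intro!: sum_nonneg)

lemma variance_le:
  assumes "u \<in> U"
  shows "V u \<le> q u * (1 - q u)"
proof -
  have "(\<Sum>j\<in>J. w j * (p j u)^2) \<le> (\<Sum>j\<in>J. w j * p j u)"
  proof (rule sum_mono)
    fix j assume j: "j \<in> J"
    have "p j u \<le> sum (p j) U"
      using j assms p U by (intro member_le_sum) auto
    then have "p j u * p j u \<le> p j u * 1"
      using p j assms by (intro mult_left_mono) auto
    then show "w j * (p j u)^2 \<le> w j * p j u"
      using w j by (intro mult_left_mono) (auto simp: power2_eq_square)
  qed
  then show ?thesis
    using second_moment_eq[of u] by (simp add: q_def power2_eq_square algebra_simps)
qed

text \<open>Since \<open>\<Sum>\<^sub>u (p j u - q u) = 0\<close>, Cauchy-Schwarz bounds the deviation at one point by the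
  deviations at the other \<open>card U - 1\<close> points.\<close>

lemma variance_le_rest:
  assumes u0: "u0 \<in> U"
  shows "V u0 \<le> (real (card U) - 1) * sum V (U - {u0})"
proof -
  have dev: "(p j u0 - q u0)^2 \<le> (real (card U) - 1) * (\<Sum>u\<in>U - {u0}. (p j u - q u)^2)" if j: "j \<in> J" for j
  proof -
    have "(\<Sum>u\<in>U. p j u - q u) = 0"
      using p j mixture_sum by (simp add: sum_subtractf)
    then have "(\<Sum>u\<in>U - {u0}. p j u - q u) = - (p j u0 - q u0)"
      using u0 U by (simp add: sum.remove)
    then have "(p j u0 - q u0)^2 = (\<Sum>u\<in>U - {u0}. p j u - q u)^2"
      by (simp add: power2_commute)
    also have "\<dots> \<le> (\<Sum>u\<in>U - {u0}. (p j u - q u)^2) * real (card (U - {u0}))"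
      by (rule sum_squared_le_sum_of_squares)
    moreover have "real (card (U - {u0})) = real (card U) - 1"
    proof -
      have "0 < card U"
        using u0 U card_gt_0_iff by blast
      then show ?thesis
        using u0 U by (simp add: of_nat_diff)
    qed
    ultimately show ?thesis
      by (simp add: mult.commute)
  qed
  have "V u0 \<le> (\<Sum>j\<in>J. w j * ((real (card U) - 1) * (\<Sum>u\<in>U - {u0}. (p j u - q u)^2)))"
    unfolding V_def using dev w by (auto intro!: sum_mono mult_left_mono)
  also have "\<dots> = (real (card U) - 1) * sum V (U - {u0})"
    by (simp add: V_def sum_distrib_left sum.swap[of _ J] mult_ac)
  finally show ?thesis .
qed

lemma component_off_diagonal_eq:
  assumes j: "j \<in> J"
  shows "(\<Sum>u\<in>U. \<Sum>v\<in>U. if u = v then 0 else p j u * p j v * (1 - q u - q v))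
      = 1 - 2 * (\<Sum>u\<in>U. q u * p j u) - (\<Sum>u\<in>U. (1 - 2 * q u) * (p j u)^2)"
proof -
  have row: "(\<Sum>v\<in>U. p j u * p j v * (1 - q u - q v)) = p j u * (1 - q u) - p j u * (\<Sum>v\<in>U. p j v * q v)" for u
  proof -
    have "(\<Sum>v\<in>U. p j u * p j v * (1 - q u - q v))
        = (\<Sum>v\<in>U. (p j u * (1 - q u)) * p j v - p j u * (p j v * q v))"
      by (rule sum.cong) (auto simp: algebra_simps)
    then show ?thesis
      using p j by (simp add: sum_subtractf sum_distrib_left[symmetric])
  qed
  have "(\<Sum>u\<in>U. \<Sum>v\<in>U. p j u * p j v * (1 - q u - q v))
      = (\<Sum>u\<in>U. p j u * (1 - q u) - p j u * (\<Sum>v\<in>U. p j v * q v))"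
    by (simp only: row)
  also have "\<dots> = sum (p j) U - (\<Sum>u\<in>U. p j u * q u) - sum (p j) U * (\<Sum>v\<in>U. p j v * q v)"
    by (simp add: sum_subtractf sum.distrib sum_distrib_right algebra_simps)
  finally have "(\<Sum>u\<in>U. \<Sum>v\<in>U. p j u * p j v * (1 - q u - q v)) = 1 - 2 * (\<Sum>u\<in>U. q u * p j u)"
    using p j by (simp add: mult.commute)
  moreover have "(\<Sum>u\<in>U. p j u * p j u * (1 - q u - q u)) = (\<Sum>u\<in>U. (1 - 2 * q u) * (p j u)^2)"
    by (rule sum.cong) (auto simp: power2_eq_square algebra_simps)
  ultimately show ?thesis
    using sum_off_diagonal[OF U, of "\<lambda>u v. p j u * p j v * (1 - q u - q v)"] by simp
qed

lemma mixture_off_diagonal_eq: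
  "(\<Sum>j\<in>J. w j * (\<Sum>u\<in>U. \<Sum>v\<in>U. if u = v then 0 else p j u * p j v * (1 - q u - q v)))
     = 1 - (\<Sum>u\<in>U. 3 * (q u)^2 - 2 * (q u)^3) - (\<Sum>u\<in>U. V u * (1 - 2 * q u))"
proof -
  have "(\<Sum>j\<in>J. w j * (\<Sum>u\<in>U. \<Sum>v\<in>U. if u = v then 0 else p j u * p j v * (1 - q u - q v)))
      = (\<Sum>j\<in>J. w j - 2 * (\<Sum>u\<in>U. q u * (w j * p j u)) - (\<Sum>u\<in>U. (1 - 2 * q u) * (w j * (p j u)^2)))"
    by (rule sum.cong[OF refl], subst component_off_diagonal_eq) (auto simp: algebra_simps sum_distrib_left sum_subtractf)
  also have "\<dots> = 1 - 2 * (\<Sum>u\<in>U. q u * q u) - (\<Sum>u\<in>U. (1 - 2 * q u) * (\<Sum>j\<in>J. w j * (p j u)^2))"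
  proof -
    have "(\<Sum>j\<in>J. \<Sum>u\<in>U. q u * (w j * p j u)) = (\<Sum>u\<in>U. q u * q u)"
      by (subst sum.swap) (simp add: q_def sum_distrib_left)
    moreover have "(\<Sum>j\<in>J. \<Sum>u\<in>U. (1 - 2 * q u) * (w j * (p j u)^2))
        = (\<Sum>u\<in>U. (1 - 2 * q u) * (\<Sum>j\<in>J. w j * (p j u)^2))"
      by (subst sum.swap) (simp add: sum_distrib_left)
    ultimately show ?thesis
      using w by (simp add: sum_subtractf sum_distrib_left[symmetric])
  qed
  also have "\<dots> = 1 - (\<Sum>u\<in>U. 3 * (q u)^2 - 2 * (q u)^3) - (\<Sum>u\<in>U. V u * (1 - 2 * q u))"
  proof -
    have "(\<Sum>u\<in>U. 2 * (q u * q u) + (1 - 2 * q u) * ((q u)^2 + V u))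
        = (\<Sum>u\<in>U. (3 * (q u)^2 - 2 * (q u)^3) + V u * (1 - 2 * q u))"
      by (rule sum.cong) (auto simp: algebra_simps power2_eq_square power3_eq_cube)
    then show ?thesis
      by (simp add: second_moment_eq sum.distrib sum_distrib_left[symmetric])
  qed
  finally show ?thesis .
qed

lemma mixture_off_diagonal_le:
  assumes "4 \<le> card U"
  shows "(\<Sum>j\<in>J. w j * (\<Sum>u\<in>U. \<Sum>v\<in>U. if u = v then 0 else p j u * p j v * (1 - q u - q v)))
     \<le> (real (card U) - 1) * (real (card U) - 2) / (real (card U))^2"
proof (cases "\<forall>u\<in>U. q u \<le> 1/2")
  case True
  then show ?thesis
    unfolding mixture_off_diagonal_eq
    by (intro cubic_variance_bound_uniform_case U assms mixture_sum)
      (auto simp: mixture_nonneg variance_nonneg)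
next
  case False
  then obtain u0 where "u0 \<in> U" "1/2 < q u0"
    by auto
  then show ?thesis
    unfolding mixture_off_diagonal_eq
    by (intro cubic_variance_bound_heavy_case U assms mixture_sum variance_le variance_le_rest)
      (auto simp: mixture_nonneg variance_nonneg)
qed

end

section \<open>Colour triangles within classes\<close>

lemma sum_by_value:
  fixes f :: "'b \<Rightarrow> real"
  assumes "finite S" "finite U" "h ` S \<subseteq> U"
  shows "(\<Sum>x\<in>S. f (h x)) = (\<Sum>u\<in>U. real (card {x\<in>S. h x = u}) * f u)"
proof -
  have "(\<Sum>x\<in>S. f (h x)) = (\<Sum>u\<in>U. \<Sum>x\<in>{x\<in>S. h x = u}. f (h x))"
    by (rule sum.group[symmetric]) (use assms in auto)
  also have "\<dots> = (\<Sum>u\<in>U. \<Sum>x\<in>{x\<in>S. h x = u}. f u)"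
    by (intro sum.cong) auto
  finally show ?thesis
    by simp
qed

lemma sum_pairs_by_value:
  fixes H :: "'b \<Rightarrow> 'b \<Rightarrow> real"
  assumes "finite S" "finite U" "h ` S \<subseteq> U"
  shows "(\<Sum>x\<in>S. \<Sum>y\<in>S. H (h x) (h y))
    = (\<Sum>u\<in>U. \<Sum>v\<in>U. real (card {x\<in>S. h x = u}) * real (card {x\<in>S. h x = v}) * H u v)"
proof -
  have "(\<Sum>x\<in>S. \<Sum>y\<in>S. H (h x) (h y)) = (\<Sum>x\<in>S. \<Sum>v\<in>U. real (card {x\<in>S. h x = v}) * H (h x) v)"
    by (intro sum.cong refl sum_by_value assms)
  also have "\<dots> = (\<Sum>u\<in>U. real (card {x\<in>S. h x = u}) * (\<Sum>v\<in>U. real (card {x\<in>S. h x = v}) * H u v))"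
    by (rule sum_by_value[OF assms])
  finally show ?thesis
    by (simp add: sum_distrib_left mult_ac)
qed

lemma count_off_diagonal_le:
  fixes U :: "'u set" and J :: "'j set" and cnt :: "'j \<Rightarrow> 'u \<Rightarrow> real"
  assumes U: "finite U" "4 \<le> card U" and J: "finite J"
    and cnt: "\<forall>j\<in>J. \<forall>u\<in>U. 0 \<le> cnt j u" "\<forall>j\<in>J. 0 < sum (cnt j) U"
  defines "M \<equiv> \<Sum>l\<in>J. sum (cnt l) U" and "T \<equiv> \<lambda>u. \<Sum>l\<in>J. cnt l u"
  shows "(\<Sum>j\<in>J. (\<Sum>u\<in>U. \<Sum>v\<in>U. if u = v then 0 else cnt j u * cnt j v * (M - T u - T v)) / sum (cnt j) U)
     \<le> (real (card U) - 1) * (real (card U) - 2) / (real (card U))^2 * M^2"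
proof (cases "J = {}")
  case True
  have "4 \<le> real (card U)"
    using U(2) by simp
  then show ?thesis
    using True by simp
next
  case False
  define N where "N j = sum (cnt j) U" for j
  have M: "0 < M"
    unfolding M_def using False J cnt(2) by (simp add: sum_pos)
  define w where "w j = N j / M" for j
  define p where "p j u = cnt j u / N j" for j u
  have q: "(\<Sum>l\<in>J. w l * p l u) = T u / M" for u
  proof -
    have "(\<Sum>l\<in>J. w l * p l u) = (\<Sum>l\<in>J. cnt l u / M)"
      using cnt(2) by (intro sum.cong) (auto simp: w_def p_def N_def)
    then show ?thesis
      by (simp add: T_def sum_divide_distrib)
  qed
  have w: "\<forall>j\<in>J. 0 \<le> w j" "sum w J = 1"
    using cnt(2) M by (auto simp: w_def N_def M_def sum_divide_distrib[symmetric] less_imp_le)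
  have p: "\<forall>j\<in>J. \<forall>u\<in>U. 0 \<le> p j u" "\<forall>j\<in>J. sum (p j) U = 1"
    using cnt by (auto simp: p_def N_def sum_divide_distrib[symmetric])
  have "(\<Sum>j\<in>J. w j * (\<Sum>u\<in>U. \<Sum>v\<in>U. if u = v then 0 else p j u * p j v * (1 - T u / M - T v / M)))
      \<le> (real (card U) - 1) * (real (card U) - 2) / (real (card U))^2"
    using mixture_off_diagonal_le[OF U(1) J w p refl refl U(2)] unfolding q .
  moreover have "w j * (\<Sum>u\<in>U. \<Sum>v\<in>U. if u = v then 0 else p j u * p j v * (1 - T u / M - T v / M))
      = (\<Sum>u\<in>U. \<Sum>v\<in>U. if u = v then 0 else cnt j u * cnt j v * (M - T u - T v)) / N j / M^2"
    if "j \<in> J" for j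
  proof -
    have "N j > 0"
      using cnt(2) that by (simp add: N_def)
    then have "w j * (if u = v then 0 else p j u * p j v * (1 - T u / M - T v / M))
        = (if u = v then 0 else cnt j u * cnt j v * (M - T u - T v)) / N j / M^2" for u v
      using M by (auto simp: w_def p_def field_simps power2_eq_square)
    then show ?thesis
      by (simp add: sum_distrib_left sum_divide_distrib)
  qed
  ultimately have "(\<Sum>j\<in>J. (\<Sum>u\<in>U. \<Sum>v\<in>U. if u = v then 0 else cnt j u * cnt j v * (M - T u - T v)) / N j) / M^2
      \<le> (real (card U) - 1) * (real (card U) - 2) / (real (card U))^2"
    by (simp add: sum_divide_distrib)
  then show ?thesis
    using M by (simp add: N_def divide_le_eq)
qed

lemma card_avoiding_two_values:
  assumes "finite C" "a \<noteq> b"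
  shows "real (card {z\<in>C. f z \<noteq> a \<and> f z \<noteq> b})
    = real (card C) - real (card {z\<in>C. f z = a}) - real (card {z\<in>C. f z = b})"
proof -
  have "{z\<in>C. f z \<noteq> a \<and> f z \<noteq> b} = C - ({z\<in>C. f z = a} \<union> {z\<in>C. f z = b})"
    by auto
  moreover have "card ({z\<in>C. f z = a} \<union> {z\<in>C. f z = b}) = card {z\<in>C. f z = a} + card {z\<in>C. f z = b}"
    using assms by (intro card_Un_disjoint) auto
  moreover have "card ({z\<in>C. f z = a} \<union> {z\<in>C. f z = b}) \<le> card C"
    using assms(1) by (intro card_mono) auto
  ultimately show ?thesis
    using assms(1) by (simp add: card_Diff_subset of_nat_diff)
qed

text \<open>The classes of \<open>h\<close>, weighted by their sizes, are the components of the mixture, and their colour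
  distributions are the \<open>p j\<close>.\<close>

lemma sum_class_triangles_le:
  fixes C :: "'a set" and h :: "'a \<Rightarrow> 'k" and col :: "'a \<Rightarrow> 'u"
  assumes C: "finite C" and U: "finite U" "4 \<le> card U" and col: "col ` C \<subseteq> U"
  shows "(\<Sum>x\<in>C. \<Sum>y\<in>{y\<in>C. h y = h x}.
            real (card {z\<in>C. col x \<noteq> col y \<and> col z \<noteq> col x \<and> col z \<noteq> col y}) / real (card {y\<in>C. h y = h x}))
     \<le> (real (card U) - 1) * (real (card U) - 2) / (real (card U))^2 * (real (card C))^2"
proof -
  define J where "J = h ` C"
  define cls where "cls j = {y\<in>C. h y = j}" for j
  define cnt where "cnt j u = real (card {z\<in>cls j. col z = u})" for j u
  define T where "T u = real (card {z\<in>C. col z = u})" for u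
  define M where "M = real (card C)"
  define H where "H u v = (if u = v then 0 else M - T u - T v)" for u v
  have J: "finite J"
    using C by (simp add: J_def)
  have cls: "finite (cls j)" "col ` cls j \<subseteq> U" for j
    using C col by (auto simp: cls_def)
  have N: "sum (cnt j) U = real (card (cls j))" for j
    using sum_by_value[OF cls(1) U(1) cls(2), of "\<lambda>_. 1"] by (simp add: cnt_def)
  have M: "(\<Sum>l\<in>J. sum (cnt l) U) = M"
    using sum.group[OF C J, of h "\<lambda>_. 1::real"] by (simp add: N M_def cls_def J_def)
  have T: "(\<Sum>l\<in>J. cnt l u) = T u" for u
  proof -
    have "(\<Sum>l\<in>J. sum (\<lambda>_. 1::real) {x\<in>{z\<in>C. col z = u}. h x = l}) = sum (\<lambda>_. 1) {z\<in>C. col z = u}"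
      by (rule sum.group) (use C J in \<open>auto simp: J_def\<close>)
    moreover have "{x\<in>{z\<in>C. col z = u}. h x = l} = {z\<in>cls l. col z = u}" for l
      by (auto simp: cls_def)
    ultimately show ?thesis
      by (simp add: cnt_def T_def)
  qed
  have triangles: "real (card {z\<in>C. col x \<noteq> col y \<and> col z \<noteq> col x \<and> col z \<noteq> col y}) = H (col x) (col y)" for x y
    using card_avoiding_two_values[OF C, of "col x" "col y" col] by (auto simp: H_def T_def M_def)
  have class_sum: "(\<Sum>x\<in>cls j. \<Sum>y\<in>cls j. H (col x) (col y))
      = (\<Sum>u\<in>U. \<Sum>v\<in>U. if u = v then 0 else cnt j u * cnt j v *
          ((\<Sum>l\<in>J. sum (cnt l) U) - (\<Sum>l\<in>J. cnt l u) - (\<Sum>l\<in>J. cnt l v)))" for j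
    unfolding sum_pairs_by_value[OF cls(1) U(1) cls(2)] M T by (intro sum.cong refl) (simp add: cnt_def H_def)
  have "(\<Sum>x\<in>C. \<Sum>y\<in>{y\<in>C. h y = h x}.
            real (card {z\<in>C. col x \<noteq> col y \<and> col z \<noteq> col x \<and> col z \<noteq> col y}) / real (card {y\<in>C. h y = h x}))
      = (\<Sum>j\<in>J. \<Sum>x\<in>cls j. \<Sum>y\<in>cls j. H (col x) (col y) / real (card (cls j)))"
  proof -
    have "(\<Sum>x\<in>C. \<Sum>y\<in>{y\<in>C. h y = h x}. H (col x) (col y) / real (card {y\<in>C. h y = h x}))
        = (\<Sum>j\<in>J. \<Sum>x\<in>{x\<in>C. h x = j}. \<Sum>y\<in>{y\<in>C. h y = h x}. H (col x) (col y) / real (card {y\<in>C. h y = h x}))"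
      by (rule sum.group[symmetric]) (use C J in \<open>auto simp: J_def\<close>)
    then show ?thesis
      unfolding triangles by (simp add: cls_def)
  qed
  also have "\<dots> = (\<Sum>j\<in>J. (\<Sum>u\<in>U. \<Sum>v\<in>U. if u = v then 0 else cnt j u * cnt j v *
          ((\<Sum>l\<in>J. sum (cnt l) U) - (\<Sum>l\<in>J. cnt l u) - (\<Sum>l\<in>J. cnt l v))) / sum (cnt j) U)"
    by (simp add: class_sum N sum_divide_distrib[symmetric])
  also have "\<dots> \<le> (real (card U) - 1) * (real (card U) - 2) / (real (card U))^2 * (\<Sum>l\<in>J. sum (cnt l) U)^2"
  proof (rule count_off_diagonal_le[OF U J])
    show "\<forall>j\<in>J. \<forall>u\<in>U. 0 \<le> cnt j u"
      by (simp add: cnt_def)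
    show "\<forall>j\<in>J. 0 < sum (cnt j) U"
      using C by (auto simp: N J_def cls_def card_gt_0_iff)
  qed
  finally show ?thesis
    by (simp add: M M_def)
qed

lemma sum_class_weights_off_diagonal:
  fixes h :: "'a \<Rightarrow> 'k"
  assumes "finite C"
  shows "(\<Sum>x\<in>C. \<Sum>y\<in>{y\<in>C. h y = h x} - {x}. 1 / real (card {y\<in>C. h y = h x}))
    = real (card C) - real (card (h ` C))"
proof -
  define cls where "cls x = {y\<in>C. h y = h x}" for x
  have cls: "x \<in> cls x" "finite (cls x)" "0 < card (cls x)" if "x \<in> C" for x
    using that assms by (auto simp: cls_def card_gt_0_iff)
  have "(\<Sum>x\<in>C. \<Sum>y\<in>cls x - {x}. 1 / real (card (cls x))) = (\<Sum>x\<in>C. 1 - 1 / real (card (cls x)))"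
  proof (rule sum.cong[OF refl])
    fix x assume x: "x \<in> C"
    then have "real (card (cls x - {x})) = real (card (cls x)) - 1"
      using cls[OF x] by (simp add: of_nat_diff)
    then show "(\<Sum>y\<in>cls x - {x}. 1 / real (card (cls x))) = 1 - 1 / real (card (cls x))"
      using cls[OF x] by (auto simp: diff_divide_distrib)
  qed
  moreover have "(\<Sum>x\<in>C. 1 / real (card (cls x))) = real (card (h ` C))"
  proof -
    have "(\<Sum>x\<in>C. 1 / real (card (cls x))) = (\<Sum>j\<in>h ` C. \<Sum>x\<in>{x\<in>C. h x = j}. 1 / real (card (cls x)))"
      using assms by (intro sum.group[symmetric]) auto
    also have "\<dots> = (\<Sum>j\<in>h ` C. 1)"
    proof (rule sum.cong[OF refl])
      fix j assume "j \<in> h ` C"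
      then have "{x\<in>C. h x = j} \<noteq> {}"
        by auto
      moreover have "(\<Sum>x\<in>{x\<in>C. h x = j}. 1 / real (card (cls x))) = (\<Sum>x\<in>{x\<in>C. h x = j}. 1 / real (card {x\<in>C. h x = j}))"
        by (intro sum.cong) (auto simp: cls_def)
      ultimately show "(\<Sum>x\<in>{x\<in>C. h x = j}. 1 / real (card (cls x))) = 1"
        using assms by simp
    qed
    finally show ?thesis
      by simp
  qed
  ultimately show ?thesis
    by (simp add: cls_def sum_subtractf)
qed

lemma exists_pair_same_class_le:
  fixes h :: "'a \<Rightarrow> 'k" and F :: "'a \<Rightarrow> 'a \<Rightarrow> real"
  assumes C: "finite C" "card (h ` C) < card C" and diag: "\<forall>x\<in>C. 0 \<le> F x x"
    and avg: "(\<Sum>x\<in>C. \<Sum>y\<in>{y\<in>C. h y = h x}. F x y / real (card {y\<in>C. h y = h x})) \<le> T"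
  shows "\<exists>x\<in>C. \<exists>y\<in>C. x \<noteq> y \<and> h x = h y \<and> F x y \<le> T / (real (card C) - real (card (h ` C)))"
proof (rule ccontr)
  define cls where "cls x = {y\<in>C. h y = h x}" for x
  define B where "B = T / (real (card C) - real (card (h ` C)))"
  assume "\<not> ?thesis"
  then have big: "B < F x y" if "x \<in> C" "y \<in> cls x - {x}" for x y
    using that by (force simp: cls_def B_def)
  have gap: "0 < real (card C) - real (card (h ` C))"
    using C(2) by simp
  have cls: "x \<in> cls x" "finite (cls x)" "0 < card (cls x)" if "x \<in> C" for x
    using that C(1) by (auto simp: cls_def card_gt_0_iff)
  obtain x0 where x0: "x0 \<in> C" "cls x0 - {x0} \<noteq> {}"
  proof -
    have "\<not> inj_on h C"
      using C(2) card_image by fastforce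
    then show ?thesis
      using that by (auto simp: inj_on_def cls_def)
  qed
  have "T = B * (\<Sum>x\<in>C. \<Sum>y\<in>cls x - {x}. 1 / real (card (cls x)))"
    using sum_class_weights_off_diagonal[OF C(1), of h] gap by (simp add: B_def cls_def)
  also have "\<dots> = (\<Sum>x\<in>C. \<Sum>y\<in>cls x - {x}. B / real (card (cls x)))"
    by (simp add: sum_distrib_left mult.commute)
  also have "\<dots> < (\<Sum>x\<in>C. \<Sum>y\<in>cls x - {x}. F x y / real (card (cls x)))"
  proof (rule sum_strict_mono_ex1[OF C(1)])
    show "\<forall>x\<in>C. (\<Sum>y\<in>cls x - {x}. B / real (card (cls x))) \<le> (\<Sum>y\<in>cls x - {x}. F x y / real (card (cls x)))"
      using big by (fastforce intro!: sum_mono divide_right_mono dest: less_imp_le)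
    show "\<exists>x\<in>C. (\<Sum>y\<in>cls x - {x}. B / real (card (cls x))) < (\<Sum>y\<in>cls x - {x}. F x y / real (card (cls x)))"
      using x0 big cls by (intro bexI[of _ x0] sum_strict_mono) (auto intro!: divide_strict_right_mono)
  qed
  also have "\<dots> \<le> (\<Sum>x\<in>C. \<Sum>y\<in>cls x. F x y / real (card (cls x)))"
  proof (rule sum_mono)
    fix x assume "x \<in> C"
    then show "(\<Sum>y\<in>cls x - {x}. F x y / real (card (cls x))) \<le> (\<Sum>y\<in>cls x. F x y / real (card (cls x)))"
      using cls[of x] diag by (simp add: sum.remove)
  qed
  also have "\<dots> \<le> T"
    using avg by (simp add: cls_def)
  finally show False
    by simp
qed

section \<open>A Kraft-type inequality\<close>

lemma exists_subset_card_eq_sum_ge: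
  fixes f :: "'a \<Rightarrow> real"
  assumes "finite A" "s \<le> card A" "\<forall>a\<in>A. 0 \<le> f a"
  shows "\<exists>V\<subseteq>A. card V = s \<and> real s * sum f A \<le> real (card A) * sum f V"
  using assms
proof (induction "card A - s" arbitrary: A)
  case 0
  then have "card A = s"
    by simp
  then show ?case
    by (intro exI[of _ A]) auto
next
  case (Suc n)
  then have "A \<noteq> {}"
    by auto
  then have "Min (f ` A) \<in> f ` A"
    using Suc.prems(1) by simp
  then obtain a where "a \<in> A" "f a = Min (f ` A)"
    by (metis imageE)
  then have a: "a \<in> A" "\<forall>b\<in>A. f a \<le> f b"
    using Suc.prems(1) by auto
  define A' where "A' = A - {a}"
  have A': "finite A'" "card A' = card A - 1" "s \<le> card A'" "n = card A' - s"
    using Suc a by (auto simp: A'_def)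
  moreover have "\<forall>a\<in>A'. 0 \<le> f a"
    using Suc.prems(3) by (simp add: A'_def)
  ultimately obtain V where V: "V \<subseteq> A'" "card V = s" "real s * sum f A' \<le> real (card A') * sum f V"
    using Suc.hyps(1) by blast
  have "(\<Sum>b\<in>V. f a) \<le> sum f V"
    using V(1) a(2) by (intro sum_mono) (auto simp: A'_def)
  then have "real s * f a \<le> sum f V"
    using V(2) by simp
  moreover have "sum f A = f a + sum f A'"
    using a Suc.prems(1) by (simp add: A'_def sum.remove)
  moreover have "real (card A') = real (card A) - 1"
    using A'(2,3) Suc.hyps(2) by (simp add: of_nat_diff)
  ultimately have "real s * sum f A \<le> real (card A') * sum f V + sum f V"
    using V(3) by (simp add: algebra_simps)
  also have "\<dots> = real (card A) * sum f V"
    using \<open>real (card A') = real (card A) - 1\<close> by (simp add: left_diff_distrib)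
  finally have "real s * sum f A \<le> real (card A) * sum f V" .
  then show ?case
    using V(1,2) unfolding A'_def by blast
qed

lemma exists_subset_card_le_sum_ge:
  fixes f :: "'a \<Rightarrow> real"
  assumes "finite A" "card A \<le> N" "s \<le> N" "\<forall>a\<in>A. 0 \<le> f a"
  shows "\<exists>V\<subseteq>A. card V \<le> s \<and> real s * sum f A \<le> real N * sum f V"
proof (cases "card A \<le> s")
  case True
  have "real s * sum f A \<le> real N * sum f A"
    using assms by (intro mult_right_mono sum_nonneg) auto
  then show ?thesis
    using True by blast
next
  case False
  then obtain V where V: "V \<subseteq> A" "card V = s" "real s * sum f A \<le> real (card A) * sum f V"
    using exists_subset_card_eq_sum_ge[OF assms(1) _ assms(4)] by (meson nat_le_linear)
  moreover have "real (card A) * sum f V \<le> real N * sum f V"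
    using assms V(1) by (intro mult_right_mono sum_nonneg) auto
  ultimately have "real s * sum f A \<le> real N * sum f V"
    by linarith
  then show ?thesis
    using V(1,2) by blast
qed

lemma sum_power_card_insert:
  fixes r :: real
  assumes "finite I" "j \<notin> I" "finite D"
  shows "(\<Sum>z\<in>D. r ^ card {i\<in>insert j I. z \<in> P i})
    = (\<Sum>z\<in>D - P j. r ^ card {i\<in>I. z \<in> P i}) + r * (\<Sum>z\<in>D \<inter> P j. r ^ card {i\<in>I. z \<in> P i})"
proof -
  have "{i\<in>insert j I. z \<in> P i} = (if z \<in> P j then insert j {i\<in>I. z \<in> P i} else {i\<in>I. z \<in> P i})" for z
    by auto
  then have card: "card {i\<in>insert j I. z \<in> P i} = (if z \<in> P j then Suc (card {i\<in>I. z \<in> P i}) else card {i\<in>I. z \<in> P i})" for z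
    using assms by simp
  have "(\<Sum>z\<in>D. r ^ card {i\<in>insert j I. z \<in> P i})
      = (\<Sum>z\<in>D - P j. r ^ card {i\<in>insert j I. z \<in> P i}) + (\<Sum>z\<in>D \<inter> P j. r ^ card {i\<in>insert j I. z \<in> P i})"
    using sum.Int_Diff[OF assms(3), of _ "P j"] by (simp add: add.commute)
  also have "\<dots> = (\<Sum>z\<in>D - P j. r ^ card {i\<in>I. z \<in> P i}) + (\<Sum>z\<in>D \<inter> P j. r * r ^ card {i\<in>I. z \<in> P i})"
    by (intro arg_cong2[where f = "(+)"] sum.cong) (simp_all only: card, simp_all)
  finally show ?thesis
    by (simp add: sum_distrib_left)
qed

lemma sum_Un_colour_classes:
  fixes g :: "'z \<Rightarrow> real"
  assumes "finite D" "V \<subseteq> f ` (D \<inter> P)"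
  shows "sum g ((D - P) \<union> {z\<in>D \<inter> P. f z \<in> V}) = sum g (D - P) + (\<Sum>v\<in>V. sum g {z\<in>D \<inter> P. f z = v})"
proof -
  have "finite V"
    using assms finite_surj by blast
  have "sum g ((D - P) \<union> {z\<in>D \<inter> P. f z \<in> V}) = sum g (D - P) + sum g {z\<in>D \<inter> P. f z \<in> V}"
    using assms(1) by (intro sum.union_disjoint) auto
  moreover have "sum g {z\<in>D \<inter> P. f z \<in> V} = (\<Sum>v\<in>V. sum g {z\<in>{z\<in>D \<inter> P. f z \<in> V}. f z = v})"
    using assms(1) \<open>finite V\<close> by (intro sum.group[symmetric]) auto
  moreover have "\<dots> = (\<Sum>v\<in>V. sum g {z\<in>D \<inter> P. f z = v})"
    by (intro sum.cong) auto
  ultimately show ?thesis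
    by simp
qed

lemma covering_without_coordinate:
  fixes P :: "'i \<Rightarrow> 'z set" and f :: "'i \<Rightarrow> 'z \<Rightarrow> 'c"
  assumes cover: "\<forall>S\<subseteq>D. card S = Suc s \<longrightarrow> (\<exists>i\<in>insert j I. S \<subseteq> P i \<and> inj_on (f i) S)"
    and V: "finite V" "card V \<le> s"
  shows "\<forall>S\<subseteq>(D - P j) \<union> {z\<in>D \<inter> P j. f j z \<in> V}. card S = Suc s \<longrightarrow> (\<exists>i\<in>I. S \<subseteq> P i \<and> inj_on (f i) S)"
proof (intro allI impI)
  fix S assume S: "S \<subseteq> (D - P j) \<union> {z\<in>D \<inter> P j. f j z \<in> V}" "card S = Suc s"
  then have "S \<subseteq> D"
    by auto
  then obtain i where i: "i \<in> insert j I" "S \<subseteq> P i" "inj_on (f i) S"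
    using cover S(2) by blast
  have "i \<noteq> j"
  proof
    assume "i = j"
    then have "f j ` S \<subseteq> V"
      using S(1) i(2) by auto
    then have "card S \<le> card V"
      using i(3) \<open>i = j\<close> V(1) by (metis card_inj_on_le)
    then show False
      using S(2) V(2) by simp
  qed
  then show "\<exists>i\<in>I. S \<subseteq> P i \<and> inj_on (f i) S"
    using i by auto
qed

text \<open>The induction step on a new index \<open>j\<close> keeps only the elements of \<open>P j\<close> whose colour lies among the
  \<open>s\<close> heaviest colour classes; the elements kept are still covered by the remaining indices.\<close>

lemma kraft_sum_le:
  fixes P :: "'i \<Rightarrow> 'z set" and f :: "'i \<Rightarrow> 'z \<Rightarrow> 'c"
  assumes "finite I" "finite D" "s \<le> N"
    and "\<forall>i\<in>I. card (f i ` (D \<inter> P i)) \<le> N"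
    and "\<forall>S\<subseteq>D. card S = Suc s \<longrightarrow> (\<exists>i\<in>I. S \<subseteq> P i \<and> inj_on (f i) S)"
  shows "(\<Sum>z\<in>D. (real s / real N) ^ card {i\<in>I. z \<in> P i}) \<le> real s"
  using assms(1,2,4,5)
proof (induction I arbitrary: D rule: finite_induct)
  case empty
  have "\<not> Suc s \<le> card D"
  proof
    assume "Suc s \<le> card D"
    then obtain S where "S \<subseteq> D" "card S = Suc s"
      by (meson obtain_subset_with_card_n)
    then show False
      using empty.prems(3) by auto
  qed
  then show ?case
    by simp
next
  case (insert j I)
  define r where "r = real s / real N"
  define g where "g z = r ^ card {i\<in>I. z \<in> P i}" for z
  define A where "A = f j ` (D \<inter> P j)"
  define W where "W v = sum g {z\<in>D \<inter> P j. f j z = v}" for v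
  have g: "0 \<le> g z" for z
    by (simp add: g_def r_def)
  have A: "finite A" "card A \<le> N"
    using insert.prems(1,2) by (auto simp: A_def)
  have "\<forall>v\<in>A. 0 \<le> W v"
    using g by (simp add: W_def sum_nonneg)
  then obtain V where V: "V \<subseteq> A" "card V \<le> s" "real s * sum W A \<le> real N * sum W V"
    using exists_subset_card_le_sum_ge[OF A assms(3)] by blast
  define D' where "D' = (D - P j) \<union> {z\<in>D \<inter> P j. f j z \<in> V}"
  have "sum g D' \<le> real s"
    unfolding g_def r_def
  proof (rule insert.IH)
    show "finite D'"
      using insert.prems(1) by (simp add: D'_def)
    have "f i ` (D' \<inter> P i) \<subseteq> f i ` (D \<inter> P i)" for i
      by (auto simp: D'_def)
    then show "\<forall>i\<in>I. card (f i ` (D' \<inter> P i)) \<le> N"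
      using insert.prems(1,2) by (meson card_mono finite_Int finite_imageI insert_iff le_trans)
    show "\<forall>S\<subseteq>D'. card S = Suc s \<longrightarrow> (\<exists>i\<in>I. S \<subseteq> P i \<and> inj_on (f i) S)"
      unfolding D'_def using insert.prems(3) V(1,2) A(1) by (intro covering_without_coordinate) (auto intro: finite_subset)
  qed
  moreover have "sum g D' = sum g (D - P j) + sum W V"
    unfolding D'_def W_def using insert.prems(1) V(1) by (intro sum_Un_colour_classes) (auto simp: A_def)
  moreover have "r * sum W A \<le> sum W V"
  proof (cases "N = 0")
    case True
    then show ?thesis
      using g by (simp add: r_def W_def sum_nonneg)
  next
    case False
    then show ?thesis
      using V(3) by (simp add: r_def field_simps)
  qed
  moreover have "sum g (D \<inter> P j) = sum W A"
    unfolding W_def A_def using insert.prems(1) by (intro sum.group[symmetric]) auto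
  ultimately show ?case
    using sum_power_card_insert[OF insert.hyps insert.prems(1), of r P] by (simp add: g_def r_def)
qed

lemma card_mul_powr_mean_le_sum_power:
  fixes r :: real and a :: "'a \<Rightarrow> nat"
  assumes "finite X" "X \<noteq> {}" "0 < r"
  shows "real (card X) * r powr ((\<Sum>z\<in>X. real (a z)) / real (card X)) \<le> (\<Sum>z\<in>X. r ^ a z)"
proof -
  define N where "N = real (card X)"
  have N: "N > 0"
    using assms by (simp add: N_def card_gt_0_iff)
  define y0 where "y0 = (\<Sum>z\<in>X. real (a z)) / N * ln r"
  have "(\<Sum>z\<in>X. exp y0 * (1 + (real (a z) * ln r - y0))) \<le> (\<Sum>z\<in>X. r ^ a z)"
  proof (rule sum_mono)
    fix z assume "z \<in> X"
    have "exp y0 * (1 + (real (a z) * ln r - y0)) \<le> exp y0 * exp (real (a z) * ln r - y0)"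
      by (intro mult_left_mono exp_ge_add_one_self) auto
    also have "\<dots> = r ^ a z"
      using assms(3) by (simp add: exp_diff exp_of_nat_mult)
    finally show "exp y0 * (1 + (real (a z) * ln r - y0)) \<le> r ^ a z" .
  qed
  moreover have "(\<Sum>z\<in>X. exp y0 * (1 + (real (a z) * ln r - y0))) = exp y0 * (N + (\<Sum>z\<in>X. real (a z)) * ln r - N * y0)"
    unfolding N_def by (simp add: sum_distrib_left[symmetric] sum.distrib sum_subtractf sum_distrib_right)
  moreover have "N + (\<Sum>z\<in>X. real (a z)) * ln r - N * y0 = N"
    using N by (simp add: y0_def)
  moreover have "r powr ((\<Sum>z\<in>X. real (a z)) / N) = exp y0"
    using assms(3) by (simp add: y0_def powr_def)
  ultimately show ?thesis
    by (simp add: N_def mult.commute)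
qed

section \<open>Hash codes\<close>

lemma finite_words: "finite (words b n)"
proof -
  have "words b n = {xs. set xs \<subseteq> {1..b} \<and> length xs = n}"
    by (auto simp: words_def)
  then show ?thesis
    by (simp add: finite_lists_length_eq)
qed

lemma card_words: "card (words b n) = b ^ n"
proof -
  have "words b n = {xs. set xs \<subseteq> {1..b} \<and> length xs = n}"
    by (auto simp: words_def)
  then show ?thesis
    by (simp add: card_lists_length_eq)
qed

lemma nth_in_words: "z \<in> words b n \<Longrightarrow> i < n \<Longrightarrow> z ! i \<in> {1..b}"
  by (auto simp: words_def dest: nth_mem)

lemma take_in_words: "z \<in> words b n \<Longrightarrow> m \<le> n \<Longrightarrow> take m z \<in> words b m"
  by (auto simp: words_def dest: in_set_takeD)

lemma hash_code_finite: "hash_code b k n C \<Longrightarrow> finite C"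
  unfolding hash_code_def using finite_words finite_subset by blast

lemma hash_code_card_le: "hash_code b k n C \<Longrightarrow> card C \<le> b ^ n"
  unfolding hash_code_def by (metis card_mono card_words finite_words)

lemma A_hash_attained:
  assumes "0 < k"
  shows "\<exists>C. hash_code b k n C \<and> card C = A_hash b k n"
proof -
  have "{card C | C. hash_code b k n C} \<subseteq> {0..b ^ n}"
    using hash_code_card_le by auto
  moreover have "hash_code b k n {}"
    using assms by (auto simp: hash_code_def)
  ultimately have "Max {card C | C. hash_code b k n C} \<in> {card C | C. hash_code b k n C}"
    by (intro Max_in) (auto intro: finite_subset)
  then show ?thesis
    by (auto simp: A_hash_def)
qed

definition distinct_coords :: "nat set \<Rightarrow> nat list \<Rightarrow> nat list \<Rightarrow> nat list \<Rightarrow> nat set" where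
  "distinct_coords I x y z = {i\<in>I. x ! i \<noteq> y ! i \<and> z ! i \<noteq> x ! i \<and> z ! i \<noteq> y ! i}"

lemma hash_code_separates_after_prefix:
  assumes hc: "hash_code b k n C"
    and xy: "x \<in> C" "y \<in> C" "x \<noteq> y" "take m x = take m y"
    and S: "S \<subseteq> C - {x, y}" "card S + 2 = k"
  shows "\<exists>i\<in>{m..<n}. x ! i \<noteq> y ! i \<and> (\<forall>z\<in>S. z ! i \<noteq> x ! i \<and> z ! i \<noteq> y ! i) \<and> inj_on (\<lambda>z. z ! i) S"
proof -
  define S' where "S' = insert x (insert y S)"
  have "finite S" "x \<notin> S" "y \<notin> S"
    using S(1) hash_code_finite[OF hc] by (auto intro: finite_subset)
  then have "card S' = k"
    using S(2) xy(3) by (simp add: S'_def)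
  moreover have "S' \<subseteq> C"
    using S(1) xy by (auto simp: S'_def)
  ultimately obtain i where i: "i < n" "inj_on (\<lambda>z. z ! i) S'"
    using hc by (auto simp: hash_code_def)
  have "x ! i \<noteq> y ! i"
    using inj_onD[OF i(2), of x y] xy(3) by (auto simp: S'_def)
  moreover from this have "m \<le> i"
    using xy(4) by (metis not_le nth_take)
  moreover have "\<forall>z\<in>S. z ! i \<noteq> x ! i \<and> z ! i \<noteq> y ! i"
    using inj_onD[OF i(2)] S(1) by (auto simp: S'_def)
  moreover have "inj_on (\<lambda>z. z ! i) S"
    using i(2) by (rule inj_on_subset) (auto simp: S'_def)
  ultimately show ?thesis
    using i(1) by auto
qed

text \<open>The colours at coordinate \<open>i\<close> are the \<open>b - 2\<close> letters other than \<open>x ! i\<close> and \<open>y ! i\<close>.\<close>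

lemma hash_code_kraft_sum_le:
  assumes hc: "hash_code b k n C" and k: "4 \<le> k" "k \<le> b"
    and xy: "x \<in> C" "y \<in> C" "x \<noteq> y" "take m x = take m y"
  shows "(\<Sum>z\<in>C. (real (k - 3) / real (b - 2)) ^ card (distinct_coords {m..<n} x y z)) \<le> real (k - 1)"
proof -
  define P where "P i = {z. x ! i \<noteq> y ! i \<and> z ! i \<noteq> x ! i \<and> z ! i \<noteq> y ! i}" for i
  define D where "D = C - {x, y}"
  have C: "finite C" "C \<subseteq> words b n"
    using hc by (auto simp: hash_code_def hash_code_finite)
  have "(\<Sum>z\<in>D. (real (k - 3) / real (b - 2)) ^ card {i\<in>{m..<n}. z \<in> P i}) \<le> real (k - 3)"
  proof (rule kraft_sum_le)
    show "finite {m..<n}" "finite D" "k - 3 \<le> b - 2"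
      using C k by (auto simp: D_def)
    show "\<forall>i\<in>{m..<n}. card ((\<lambda>z. z ! i) ` (D \<inter> P i)) \<le> b - 2"
    proof
      fix i assume i: "i \<in> {m..<n}"
      show "card ((\<lambda>z. z ! i) ` (D \<inter> P i)) \<le> b - 2"
      proof (cases "x ! i = y ! i")
        case False
        have "(\<lambda>z. z ! i) ` (D \<inter> P i) \<subseteq> {1..b} - {x ! i, y ! i}"
          using C(2) i nth_in_words[of _ b n i] by (force simp: D_def P_def)
        moreover have "{x ! i, y ! i} \<subseteq> {1..b}"
          using C(2) xy i nth_in_words[of _ b n i] by auto
        then have "card ({1..b} - {x ! i, y ! i}) = b - 2"
          using False by (simp add: card_Diff_subset)
        ultimately show ?thesis
          by (metis card_mono finite_Diff finite_atLeastAtMost)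
      qed (simp add: P_def)
    qed
    show "\<forall>S\<subseteq>D. card S = Suc (k - 3) \<longrightarrow> (\<exists>i\<in>{m..<n}. S \<subseteq> P i \<and> inj_on (\<lambda>z. z ! i) S)"
    proof (intro allI impI)
      fix S assume S: "S \<subseteq> D" "card S = Suc (k - 3)"
      have "card S + 2 = k"
        using S(2) k by simp
      then obtain i where "i \<in> {m..<n}" "x ! i \<noteq> y ! i" "\<forall>z\<in>S. z ! i \<noteq> x ! i \<and> z ! i \<noteq> y ! i"
          "inj_on (\<lambda>z. z ! i) S"
        using hash_code_separates_after_prefix[OF hc xy, of S] S(1) by (auto simp: D_def)
      then show "\<exists>i\<in>{m..<n}. S \<subseteq> P i \<and> inj_on (\<lambda>z. z ! i) S"
        by (auto simp: P_def)
    qed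
  qed
  moreover have "{i\<in>{m..<n}. z \<in> P i} = distinct_coords {m..<n} x y z" for z
    by (auto simp: P_def distinct_coords_def)
  moreover have "distinct_coords {m..<n} x y x = {}" "distinct_coords {m..<n} x y y = {}"
    by (auto simp: distinct_coords_def)
  moreover have "(\<Sum>z\<in>C. G z) = G x + (G y + (\<Sum>z\<in>D. G z))" for G :: "nat list \<Rightarrow> real"
  proof -
    have "C = insert x (insert y D)" "x \<notin> insert y D" "y \<notin> D" "finite D"
      using xy C(1) by (auto simp: D_def)
    then show ?thesis
      by simp
  qed
  ultimately show ?thesis
    using k by (simp add: of_nat_diff)
qed

lemma hash_code_log_card_le:
  assumes hc: "hash_code b k n C" and k: "4 \<le> k" "k \<le> b"
    and xy: "x \<in> C" "y \<in> C" "x \<noteq> y" "take m x = take m y"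
  shows "log 2 (real (card C) / real (k - 1))
    \<le> log 2 (real (b - 2) / real (k - 3)) * (\<Sum>z\<in>C. real (card (distinct_coords {m..<n} x y z))) / real (card C)"
proof -
  define r where "r = real (k - 3) / real (b - 2)"
  define M where "M = real (card C)"
  define F where "F = (\<Sum>z\<in>C. real (card (distinct_coords {m..<n} x y z)))"
  have C: "finite C" "C \<noteq> {}"
    using hc xy by (auto simp: hash_code_finite)
  then have M: "0 < M"
    by (simp add: M_def card_gt_0_iff)
  have r: "0 < r"
    using k by (simp add: r_def)
  have "M * r powr (F / M) \<le> real (k - 1)"
    using card_mul_powr_mean_le_sum_power[OF C r, of "\<lambda>z. card (distinct_coords {m..<n} x y z)"]
      hash_code_kraft_sum_le[OF assms] by (simp add: M_def F_def r_def)
  then have "log 2 (M * r powr (F / M)) \<le> log 2 (real (k - 1))"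
    using M r by (intro log_mono) auto
  moreover have "log 2 (M * r powr (F / M)) = log 2 M - log 2 (real (b - 2) / real (k - 3)) * (F / M)"
    using M r k by (simp add: log_mult log_powr r_def log_divide algebra_simps)
  ultimately show ?thesis
    using M k by (simp add: log_divide M_def F_def)
qed

lemma hash_code_sum_prefix_classes_le:
  assumes hc: "hash_code b k n C" and b: "4 \<le> b"
  shows "(\<Sum>x\<in>C. \<Sum>y\<in>{y\<in>C. take m y = take m x}.
      (\<Sum>z\<in>C. real (card (distinct_coords {m..<n} x y z))) / real (card {y\<in>C. take m y = take m x}))
    \<le> real (n - m) * ((real b - 1) * (real b - 2) / (real b)^2) * (real (card C))^2"
proof -
  define T where "T x y i = real (card {z\<in>C. x ! i \<noteq> y ! i \<and> z ! i \<noteq> x ! i \<and> z ! i \<noteq> y ! i})" for x y i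
  have C: "finite C" "C \<subseteq> words b n"
    using hc by (auto simp: hash_code_def hash_code_finite)
  have "(\<Sum>z\<in>C. real (card (distinct_coords {m..<n} x y z))) = (\<Sum>i\<in>{m..<n}. T x y i)" for x y
  proof -
    have "(\<Sum>z\<in>C. real (card (distinct_coords {m..<n} x y z)))
        = (\<Sum>z\<in>C. \<Sum>i\<in>{m..<n}. if x ! i \<noteq> y ! i \<and> z ! i \<noteq> x ! i \<and> z ! i \<noteq> y ! i then 1 else 0)"
      by (simp add: distinct_coords_def sum.inter_filter[symmetric])
    also have "\<dots> = (\<Sum>i\<in>{m..<n}. T x y i)"
      using C(1) by (subst sum.swap) (simp add: T_def sum.inter_filter[symmetric])
    finally show ?thesis .
  qed
  then have "(\<Sum>x\<in>C. \<Sum>y\<in>{y\<in>C. take m y = take m x}.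
      (\<Sum>z\<in>C. real (card (distinct_coords {m..<n} x y z))) / real (card {y\<in>C. take m y = take m x}))
      = (\<Sum>i\<in>{m..<n}. \<Sum>x\<in>C. \<Sum>y\<in>{y\<in>C. take m y = take m x}. T x y i / real (card {y\<in>C. take m y = take m x}))"
    by (simp add: sum_divide_distrib sum.swap[of _ "{m..<n}"])
  also have "\<dots> \<le> (\<Sum>i\<in>{m..<n}. (real b - 1) * (real b - 2) / (real b)^2 * (real (card C))^2)"
  proof (rule sum_mono)
    fix i assume "i \<in> {m..<n}"
    then have "(\<lambda>z. z ! i) ` C \<subseteq> {1..b}"
      using C(2) nth_in_words by auto
    then show "(\<Sum>x\<in>C. \<Sum>y\<in>{y\<in>C. take m y = take m x}. T x y i / real (card {y\<in>C. take m y = take m x}))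
        \<le> (real b - 1) * (real b - 2) / (real b)^2 * (real (card C))^2"
      using sum_class_triangles_le[OF C(1) finite_atLeastAtMost, of 1 b "\<lambda>z. z ! i" "take m"] b
      by (simp add: T_def)
  qed
  finally show ?thesis
    by (simp add: mult_ac)
qed

lemma hash_code_log_card_le_prefix:
  assumes hc: "hash_code b k n C" and k: "4 \<le> k" "k \<le> b" and m: "m \<le> n"
    and big: "real b ^ m < real (card C)"
  shows "log 2 (real (card C) / real (k - 1)) \<le> log 2 (real (b - 2) / real (k - 3))
      * ((real b - 1) * (real b - 2) / (real b)^2) * real (n - m) * (real (card C) / (real (card C) - real b ^ m))"
proof -
  define M where "M = real (card C)"
  define c where "c = (real b - 1) * (real b - 2) / (real b)^2"
  define lam where "lam = log 2 (real (b - 2) / real (k - 3))"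
  define F where "F x y = (\<Sum>z\<in>C. real (card (distinct_coords {m..<n} x y z)))" for x y
  have C: "finite C" "C \<subseteq> words b n"
    using hc by (auto simp: hash_code_def hash_code_finite)
  have "take m ` C \<subseteq> words b m"
    using C(2) m take_in_words by blast
  then have prefixes: "real (card (take m ` C)) \<le> real b ^ m"
    by (metis card_mono card_words finite_words of_nat_le_iff of_nat_power)
  obtain x y where xy: "x \<in> C" "y \<in> C" "x \<noteq> y" "take m x = take m y"
      and Fxy: "F x y \<le> real (n - m) * c * M^2 / (M - real (card (take m ` C)))"
    using exists_pair_same_class_le[OF C(1), of "take m" F] hash_code_sum_prefix_classes_le[OF hc, of m] prefixes big k
    by (force simp: F_def distinct_coords_def M_def c_def)
  have M: "0 < M" "real b ^ m < M"
    using big by (simp_all add: M_def)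
  have "F x y / M \<le> real (n - m) * c * (M / (M - real (card (take m ` C))))"
    using Fxy M by (simp add: divide_right_mono power2_eq_square field_simps)
  also have "\<dots> \<le> real (n - m) * c * (M / (M - real b ^ m))"
  proof -
    have "0 < M - real b ^ m" "M - real b ^ m \<le> M - real (card (take m ` C))"
      using M prefixes by auto
    then have "M / (M - real (card (take m ` C))) \<le> M / (M - real b ^ m)"
      by (intro divide_left_mono mult_pos_pos) (use M prefixes in linarith)+
    then show ?thesis
      using k by (intro mult_left_mono) (auto simp: c_def)
  qed
  finally have "F x y / M \<le> real (n - m) * c * (M / (M - real b ^ m))" .
  moreover have "0 \<le> lam"
  proof -
    have "1 \<le> real (b - 2) / real (k - 3)"
      using k by simp
    then show ?thesis
      by (simp add: lam_def)
  qed
  ultimately have "lam * (F x y / M) \<le> lam * (real (n - m) * c * (M / (M - real b ^ m)))"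
    by (intro mult_left_mono)
  then show ?thesis
    using hash_code_log_card_le[OF hc k xy] by (simp add: lam_def c_def M_def F_def mult_ac)
qed

section \<open>Asymptotics\<close>

lemma exists_prefix_length:
  fixes M g :: real
  assumes b: "2 \<le> b" and M: "0 < M" "M \<le> real b ^ n" and g: "0 \<le> g" "g \<le> log 2 M"
  shows "\<exists>m\<le>n. real b ^ m \<le> M * 2 powr (- g)
    \<and> real (n - m) \<le> real n + 1 + (g - log 2 M) / log 2 (real b)"
proof -
  define \<beta> where "\<beta> = log 2 (real b)"
  define L where "L = log 2 M"
  define m where "m = nat \<lfloor>(L - g) / \<beta>\<rfloor>"
  have \<beta>: "0 < \<beta>"
    using b by (simp add: \<beta>_def)
  have "0 \<le> (L - g) / \<beta>"
    using g \<beta> by (simp add: L_def)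
  then have "real m = of_int \<lfloor>(L - g) / \<beta>\<rfloor>"
    by (simp add: m_def)
  then have m: "real m \<le> (L - g) / \<beta>" "(L - g) / \<beta> < real m + 1"
    by linarith+
  have "real b ^ m = (2 powr \<beta>) powr real m"
    using b by (simp add: \<beta>_def powr_realpow)
  also have "\<dots> = 2 powr (real m * \<beta>)"
    by (simp add: powr_powr mult.commute)
  also have "\<dots> \<le> 2 powr (L - g)"
    using m(1) \<beta> by (simp add: field_simps)
  also have "\<dots> = 2 powr L * 2 powr (- g)"
    by (simp add: powr_add[symmetric])
  also have "\<dots> = M * 2 powr (- g)"
    using M(1) by (simp add: L_def)
  finally have "real b ^ m \<le> M * 2 powr (- g)" .
  moreover have "m \<le> n"
  proof -
    have "L \<le> log 2 (real b ^ n)"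
      using M unfolding L_def by (intro log_mono) auto
    then have "L \<le> real n * \<beta>"
      using b by (simp add: \<beta>_def log_nat_power)
    then have "(L - g) / \<beta> \<le> real n"
      using g \<beta> by (simp add: field_simps)
    then show ?thesis
      using m(1) by simp
  qed
  moreover have "real (n - m) \<le> real n + 1 + (g - L) / \<beta>"
    using m(2) \<open>m \<le> n\<close> by (simp add: of_nat_diff diff_divide_distrib)
  ultimately show ?thesis
    unfolding \<beta>_def L_def by blast
qed

text \<open>With \<open>b\<^sup>m \<le> 2\<^sup>-\<^sup>g card C\<close> the factor \<open>card C / (card C - b\<^sup>m)\<close> is at most \<open>1 / (1 - 2\<^sup>-\<^sup>g)\<close>.\<close>

lemma hash_code_log_card_bound:
  fixes g :: real
  assumes hc: "hash_code b k n C" and k: "4 \<le> k" "k \<le> b" and g: "1 \<le> g" "g \<le> log 2 (real (card C))"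
  defines "\<beta> \<equiv> log 2 (real b)"
    and "\<theta> \<equiv> log 2 (real (b - 2) / real (k - 3)) * ((real b - 1) * (real b - 2) / (real b)^2) / (1 - 2 powr (- g))"
  shows "log 2 (real (card C)) * (1 + \<theta> / \<beta>) \<le> \<theta> * (real n + 1 + g / \<beta>) + log 2 (real (k - 1))"
proof -
  define M where "M = real (card C)"
  define L where "L = log 2 M"
  define a where "a = log 2 (real (b - 2) / real (k - 3)) * ((real b - 1) * (real b - 2) / (real b)^2)"
  define e where "e = 2 powr (- g)"
  have a: "0 < a"
    using k by (simp add: a_def)
  have "(2::real) powr (- g) < 2 powr 0"
    using g by (intro powr_less_mono) auto
  then have e: "0 < e" "e < 1"
    by (simp_all add: e_def)
  have M: "0 < M"
  proof (rule ccontr)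
    assume "\<not> 0 < M"
    then have "log 2 (real (card C)) = 0"
      by (simp add: M_def log_def)
    then show False
      using g by simp
  qed
  moreover have "M \<le> real b ^ n"
    using hash_code_card_le[OF hc] by (simp add: M_def flip: of_nat_power)
  ultimately have "\<exists>m\<le>n. real b ^ m \<le> M * e \<and> real (n - m) \<le> real n + 1 + (g - L) / \<beta>"
    unfolding e_def L_def \<beta>_def using k g by (intro exists_prefix_length) (auto simp: M_def)
  then obtain m where m: "m \<le> n" "real b ^ m \<le> M * e" "real (n - m) \<le> real n + 1 + g / \<beta> - L / \<beta>"
    by (auto simp: diff_divide_distrib)
  moreover have "real b ^ m < real (card C)"
    using m(2) e M unfolding M_def by (smt (verit) mult_less_cancel_left2)
  ultimately have "log 2 (M / real (k - 1)) \<le> a * real (n - m) * (M / (M - real b ^ m))"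
    using hash_code_log_card_le_prefix[OF hc k] by (simp add: a_def M_def mult.assoc)
  also have "\<dots> \<le> a * real (n - m) * (1 / (1 - e))"
  proof -
    have "0 < M * (1 - e)" "M * (1 - e) \<le> M - real b ^ m"
      using m(2) e M by (auto simp: algebra_simps)
    then have "M / (M - real b ^ m) \<le> M / (M * (1 - e))"
      by (intro divide_left_mono mult_pos_pos) (use M e in linarith)+
    then have "M / (M - real b ^ m) \<le> 1 / (1 - e)"
      using M by simp
    then show ?thesis
      using a by (intro mult_left_mono) auto
  qed
  also have "\<dots> \<le> a * (real n + 1 + g / \<beta> - L / \<beta>) * (1 / (1 - e))"
    using m(3) a e by (intro mult_right_mono mult_left_mono) auto
  also have "\<dots> = \<theta> * (real n + 1 + g / \<beta>) - \<theta> * L / \<beta>"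
    by (simp add: \<theta>_def a_def e_def divide_inverse algebra_simps)
  finally have "L - log 2 (real (k - 1)) \<le> \<theta> * (real n + 1 + g / \<beta>) - \<theta> * L / \<beta>"
    using M k by (simp add: L_def log_divide)
  then show ?thesis
    by (simp add: L_def M_def algebra_simps)
qed

lemma tendsto_rate_bound:
  fixes a \<beta> L :: real
  assumes a: "0 < a" and \<beta>: "0 < \<beta>"
  shows "(\<lambda>n. (a / (1 - 2 powr (- sqrt (real n))) * (1 + (1 + sqrt (real n) / \<beta>) / real n) + L / real n)
      / (1 + a / (1 - 2 powr (- sqrt (real n))) / \<beta>)) \<longlonglongrightarrow> inverse (1 / \<beta> + 1 / a)"
proof -
  have "(\<lambda>n. 2 powr (- sqrt (real n))) \<longlonglongrightarrow> 0"
    by real_asymp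
  moreover have "(\<lambda>n. (1 + sqrt (real n) / \<beta>) / real n) \<longlonglongrightarrow> 0"
    using \<beta> by real_asymp
  moreover have "(\<lambda>n. L / real n) \<longlonglongrightarrow> 0"
    by real_asymp
  moreover have "0 < a / \<beta>"
    using a \<beta> by simp
  ultimately have "(\<lambda>n. (a / (1 - 2 powr (- sqrt (real n))) * (1 + (1 + sqrt (real n) / \<beta>) / real n) + L / real n)
      / (1 + a / (1 - 2 powr (- sqrt (real n))) / \<beta>)) \<longlonglongrightarrow> (a / (1 - 0) * (1 + 0) + 0) / (1 + a / (1 - 0) / \<beta>)"
    by (intro tendsto_intros) auto
  moreover have "(a / (1 - 0) * (1 + 0) + 0) / (1 + a / (1 - 0) / \<beta>) = inverse (1 / \<beta> + 1 / a)"
    using a \<beta> by (simp add: field_simps)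
  ultimately show ?thesis
    by simp
qed

text \<open>For short codes (\<open>log\<^sub>2 |C| < \<surd>n\<close>) there is nothing to prove; otherwise take \<open>g = \<surd>n\<close> above.\<close>

lemma log_A_hash_le:
  assumes k: "4 \<le> k" "k \<le> b" and n: "1 \<le> n"
  defines "\<beta> \<equiv> log 2 (real b)"
    and "\<theta> \<equiv> log 2 (real (b - 2) / real (k - 3)) * ((real b - 1) * (real b - 2) / (real b)^2)
      / (1 - 2 powr (- sqrt (real n)))"
  shows "log 2 (real (A_hash b k n)) / real n
    \<le> max (sqrt (real n) / real n) ((\<theta> * (1 + (1 + sqrt (real n) / \<beta>) / real n) + log 2 (real (k - 1)) / real n) / (1 + \<theta> / \<beta>))"
proof -
  obtain C where C: "hash_code b k n C" "card C = A_hash b k n"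
    using A_hash_attained[of k b n] k by auto
  define L where "L = log 2 (real (card C))"
  show ?thesis
  proof (cases "L < sqrt (real n)")
    case True
    then have "L / real n \<le> sqrt (real n) / real n"
      using n by (simp add: divide_right_mono)
    then show ?thesis
      by (simp add: L_def C(2))
  next
    case False
    have "0 < \<beta>"
      using k by (simp add: \<beta>_def)
    moreover have "0 < \<theta>"
    proof -
      have "(2::real) powr (- sqrt (real n)) < 2 powr 0"
        using n by (intro powr_less_mono) auto
      then show ?thesis
        using k by (simp add: \<theta>_def)
    qed
    ultimately have "0 < 1 + \<theta> / \<beta>"
      by (simp add: add_pos_pos)
    moreover have "L * (1 + \<theta> / \<beta>) \<le> \<theta> * (real n + 1 + sqrt (real n) / \<beta>) + log 2 (real (k - 1))"
      using hash_code_log_card_bound[OF C(1) k, of "sqrt (real n)"] False n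
      by (simp add: L_def \<beta>_def \<theta>_def)
    ultimately have "L \<le> (\<theta> * (real n + 1 + sqrt (real n) / \<beta>) + log 2 (real (k - 1))) / (1 + \<theta> / \<beta>)"
      by (simp add: pos_le_divide_eq)
    then have "L / real n \<le> (\<theta> * (real n + 1 + sqrt (real n) / \<beta>) + log 2 (real (k - 1))) / (1 + \<theta> / \<beta>) / real n"
      by (rule divide_right_mono) simp
    also have "\<dots> = (\<theta> * (1 + (1 + sqrt (real n) / \<beta>) / real n) + log 2 (real (k - 1)) / real n) / (1 + \<theta> / \<beta>)"
      using n by (simp add: field_simps)
    finally show ?thesis
      by (simp add: L_def C(2))
  qed
qed

theorem lemma1:
  fixes b k :: nat
  assumes "4 \<le> k" and "k \<le> b"
  shows "R_hash b k \<le> ereal (inverse (1 / log 2 (real b)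
     + (real b)^2 / (((real b)^2 - 3 * real b + 2) * log 2 ((real b - 2) / (real k - 3)))))"
proof -
  define \<beta> where "\<beta> = log 2 (real b)"
  define a where "a = log 2 (real (b - 2) / real (k - 3)) * ((real b - 1) * (real b - 2) / (real b)^2)"
  define u where "u n = max (sqrt (real n) / real n)
    ((a / (1 - 2 powr (- sqrt (real n))) * (1 + (1 + sqrt (real n) / \<beta>) / real n) + log 2 (real (k - 1)) / real n)
      / (1 + a / (1 - 2 powr (- sqrt (real n))) / \<beta>))" for n
  have \<beta>: "0 < \<beta>" and a: "0 < a"
    using assms by (simp_all add: \<beta>_def a_def)
  have "u \<longlonglongrightarrow> max 0 (inverse (1 / \<beta> + 1 / a))"
    unfolding u_def by (intro tendsto_max tendsto_rate_bound a \<beta>) real_asymp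
  moreover have "max 0 (inverse (1 / \<beta> + 1 / a)) = inverse (1 / \<beta> + 1 / a)"
    using a \<beta> by simp
  ultimately have "limsup (\<lambda>n. ereal (u n)) = ereal (inverse (1 / \<beta> + 1 / a))"
    by (intro lim_imp_Limsup) (simp_all add: lim_ereal)
  moreover have "R_hash b k \<le> limsup (\<lambda>n. ereal (u n))"
  proof -
    have "log 2 (real (A_hash b k n)) / real n \<le> u n" if "1 \<le> n" for n
      unfolding u_def \<beta>_def a_def by (rule log_A_hash_le[OF assms that])
    then show ?thesis
      unfolding R_hash_def by (intro Limsup_mono eventually_sequentiallyI[of 1]) simp
  qed
  moreover have "(real b)^2 / (((real b)^2 - 3 * real b + 2) * log 2 ((real b - 2) / (real k - 3))) = 1 / a"
    using assms by (simp add: a_def of_nat_diff power2_eq_square algebra_simps)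
  ultimately show ?thesis
    by (simp add: \<beta>_def)
qed

end
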